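(* Let $\kappa>0$ and $\lambda\in\mathbb C\setminus\{0\}$. For every finite interval $\Lambda\subset\mathbb Z$ with $|\Lambda|\ge8$ or $|\Lambda|\in\{5,6\}$, $\ker H_\Lambda=\mathcal G_\Lambda$. For $|\Lambda|=7$, $\ker H_\Lambda=\mathcal G_\Lambda\oplus\operatorname{span}\{|1100011\rangle\}$.
   Context: $\mathcal H_\Lambda=\bigotimes_{x\in\Lambda}\mathbb C^2$ with basis $|1\rangle,|0\rangle$ per site and product basis $|\boldsymbol\sigma\rangle$; $n_x=|1\rangle\langle1|_x$, $\sigma^-_x=|0\rangle\langle1|_x$. For $\Lambda=[a,b]$, $H_\Lambda=\sum_{x=a}^{b-2}n_xn_{x+2}+\kappa\sum_{x=a}^{b-3}q_x^*q_x$ with $q_x=\sigma^-_{x+1}\sigma^-_{x+2}-\lambda\sigma^-_x\sigma^-_{x+3}$. Tiles occupy consecutive sites and carry 0/1 words: void $0$; monomer $100$; dimer $011000$; left boundary dimer $11000$ (only as first tile); and, only as last tile: right dimer $011$, right 1-monomer $1$, right 2-monomer $10$, truncated 1-dimer $0110$, truncated 2-dimer $01100$. A root tiling $R$ of $\Lambda$ is a tiling by consecutive voids and monomers, optionally with a left boundary dimer as first tile and optionally with one of right dimer, right 1-monomer, right 2-monomer as last tile; $\mathcal R_\Lambda$ is their set. A VMD tiling derived from $R$ is obtained by choosing disjoint pairs of consecutive tiles of $R$, each either two monomers (replaced by a dimer) or a monomer followed by a right $j$-monomer, $j\in\{1,2\}$ (replaced by the truncated $j$-dimer); $\mathcal D_\Lambda(R)$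 is their set, $\boldsymbol\sigma_\Lambda(\mathbf D)$ the concatenated content, $\#(\mathbf D)$ the number of tiles that are dimers, boundary dimers or truncated dimers, $\psi_\Lambda(R)=\sum_{\mathbf D\in\mathcal D_\Lambda(R)}\lambda^{\#(\mathbf D)}|\boldsymbol\sigma_\Lambda(\mathbf D)\rangle$ and $\mathcal G_\Lambda=\operatorname{span}\{\psi_\Lambda(R):R\in\mathcal R_\Lambda\}$. *)

theory Defs
  imports Complex_Main
begin

text \<open>Sites of an interval \<Lambda> = [a,b] of length n = b - a + 1 are labelled 0..n-1
  (site a+i is labelled i). Basis configurations are boolean lists of length n
  (True = |1>, False = |0>).\<close>

type_synonym state = "bool list \<Rightarrow> complex"

definition Hspace :: "nat \<Rightarrow> state set" where
  "Hspace n = {\<psi>. \<forall>\<sigma>. length \<sigma> \<noteq> n \<longrightarrow> \<psi> \<sigma> = 0}"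

definition ket :: "bool list \<Rightarrow> state" where
  "ket \<tau> = (\<lambda>\<sigma>. if \<sigma> = \<tau> then 1 else 0)"

definition num_op :: "nat \<Rightarrow> state \<Rightarrow> state" where
  "num_op x \<psi> = (\<lambda>\<sigma>. if x < length \<sigma> \<and> \<sigma> ! x then \<psi> \<sigma> else 0)"

definition lower_op :: "nat \<Rightarrow> state \<Rightarrow> state" where
  "lower_op x \<psi> = (\<lambda>\<sigma>. if x < length \<sigma> \<and> \<not> \<sigma> ! x then \<psi> (\<sigma>[x := True]) else 0)"

definition raise_op :: "nat \<Rightarrow> state \<Rightarrow> state" where
  "raise_op x \<psi> = (\<lambda>\<sigma>. if x < length \<sigma> \<and> \<sigma> ! x then \<psi> (\<sigma>[x := False]) else 0)"

definition q_op :: "complex \<Rightarrow> nat \<Rightarrow> state \<Rightarrow> state" where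
  "q_op lam x \<psi> = (\<lambda>\<sigma>. lower_op (x+1) (lower_op (x+2) \<psi>) \<sigma>
                       - lam * lower_op x (lower_op (x+3) \<psi>) \<sigma>)"

definition qstar_op :: "complex \<Rightarrow> nat \<Rightarrow> state \<Rightarrow> state" where
  "qstar_op lam x \<psi> = (\<lambda>\<sigma>. raise_op (x+2) (raise_op (x+1) \<psi>) \<sigma>
                       - cnj lam * raise_op (x+3) (raise_op x \<psi>) \<sigma>)"

definition Ham :: "nat \<Rightarrow> real \<Rightarrow> complex \<Rightarrow> state \<Rightarrow> state" where
  "Ham n \<kappa> lam \<psi> = (\<lambda>\<sigma>. (\<Sum>x<n-2. num_op x (num_op (x+2) \<psi>) \<sigma>)
        + complex_of_real \<kappa> * (\<Sum>x<n-3. qstar_op lam x (q_op lam x \<psi>) \<sigma>))"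

definition kerH :: "nat \<Rightarrow> real \<Rightarrow> complex \<Rightarrow> state set" where
  "kerH n \<kappa> lam = {\<psi> \<in> Hspace n. Ham n \<kappa> lam \<psi> = (\<lambda>_. 0)}"

definition cspan :: "state set \<Rightarrow> state set" where
  "cspan S = {v. \<exists>F c. finite F \<and> F \<subseteq> S \<and> v = (\<lambda>\<sigma>. \<Sum>u\<in>F. c u * u \<sigma>)}"

datatype tile = Void | Mono | Dimer | LBDimer | RDimer | RMono1 | RMono2 | TDimer1 | TDimer2

fun word :: "tile \<Rightarrow> bool list" where
  "word Void = [False]"
| "word Mono = [True, False, False]"
| "word Dimer = [False, True, True, False, False, False]"
| "word LBDimer = [True, True, False, False, False]"
| "word RDimer = [False, True, True]"
| "word RMono1 = [True]"
| "word RMono2 = [True, False]"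
| "word TDimer1 = [False, True, True, False]"
| "word TDimer2 = [False, True, True, False, False]"

definition content :: "tile list \<Rightarrow> bool list" where
  "content ts = concat (map word ts)"

definition is_root :: "tile list \<Rightarrow> bool" where
  "is_root ts \<longleftrightarrow> (\<exists>l m r. ts = l @ m @ r \<and> (l = [] \<or> l = [LBDimer])
      \<and> set m \<subseteq> {Void, Mono}
      \<and> (r = [] \<or> r = [RDimer] \<or> r = [RMono1] \<or> r = [RMono2]))"

definition roots :: "nat \<Rightarrow> tile list set" where
  "roots n = {ts. is_root ts \<and> length (content ts) = n}"

inductive derived :: "tile list \<Rightarrow> tile list \<Rightarrow> bool" where
  derived_Nil: "derived [] []"
| derived_keep: "derived ts ds \<Longrightarrow> derived (t # ts) (t # ds)"
| derived_dimer: "derived ts ds \<Longrightarrow> derived (Mono # Mono # ts) (Dimer # ds)"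
| derived_trunc1: "derived ts ds \<Longrightarrow> derived (Mono # RMono1 # ts) (TDimer1 # ds)"
| derived_trunc2: "derived ts ds \<Longrightarrow> derived (Mono # RMono2 # ts) (TDimer2 # ds)"

definition ndimers :: "tile list \<Rightarrow> nat" where
  "ndimers ds = length (filter (\<lambda>t. t \<in> {Dimer, LBDimer, TDimer1, TDimer2}) ds)"

definition psi :: "complex \<Rightarrow> tile list \<Rightarrow> state" where
  "psi lam R = (\<lambda>\<sigma>. \<Sum>D\<in>{D. derived R D}. if content D = \<sigma> then lam ^ ndimers D else 0)"

definition Gspace :: "nat \<Rightarrow> complex \<Rightarrow> state set" where
  "Gspace n lam = cspan (psi lam ` roots n)"

end

theory Submission
  imports Defs "HOL-Library.Sublist"
begin

text \<open>
  Both parts of H_\<Lambda> are sums of positive semidefinite terms, so (for \<kappa> > 0) \<psi> lies in the kernel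
  iff n_x n_{x+2} \<psi> = 0 and q_x \<psi> = 0 for all x: \<psi> vanishes on configurations containing a
  factor 1b1, and \<psi>(..0110..) = \<lambda> \<psi>(..1001..). A VMD tiling is determined by its content
  (a greedy decoder inverts it), and replacing a factor 0110 by 1001 in a VMD content splits one
  dimer into two monomers of the same root tiling. Hence on the contents of the tilings derived
  from a root R the conditions force \<psi> to be proportional to \<psi>_\<Lambda>(R). Every other configuration
  of length at least 5 contains one of 101, 111, 10011, 11001, 1100011; using \<lambda> \<noteq> 0 the
  conditions force \<psi> to vanish there, except at the configuration 1100011 itself, which only
  exists for |\<Lambda>| = 7 and spans the additional ground state.
\<close>

section \<open>VMD tilings and their root tilings\<close>

lemma content_Nil [simp]: "content [] = []"
  by (simp add: content_def)

lemma content_Cons [simp]: "content (t # D) = word t @ content D"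
  by (simp add: content_def)

lemma content_append [simp]: "content (A @ B) = content A @ content B"
  by (simp add: content_def)

lemma word_ne_Nil [simp]: "word t \<noteq> []"
  by (cases t) auto

lemma ndimers_Nil [simp]: "ndimers [] = 0"
  by (simp add: ndimers_def)

lemma ndimers_Cons [simp]:
  "ndimers (t # D) = (if t \<in> {Dimer, LBDimer, TDimer1, TDimer2} then Suc (ndimers D) else ndimers D)"
  by (simp add: ndimers_def)

lemma ndimers_append [simp]: "ndimers (A @ B) = ndimers A + ndimers B"
  by (simp add: ndimers_def)

definition plain_vmd :: "tile list \<Rightarrow> bool" where
  "plain_vmd D \<longleftrightarrow> set (butlast D) \<subseteq> {Void, Mono, Dimer} \<and> LBDimer \<notin> set D"

definition vmd :: "tile list \<Rightarrow> bool" where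
  "vmd D \<longleftrightarrow> plain_vmd D \<or> (\<exists>D'. D = LBDimer # D' \<and> plain_vmd D')"

lemma plain_vmd_Nil [simp]: "plain_vmd []"
  by (simp add: plain_vmd_def)

lemma plain_vmd_Cons:
  "plain_vmd (t # D) \<longleftrightarrow> (if D = [] then t \<noteq> LBDimer else t \<in> {Void, Mono, Dimer} \<and> plain_vmd D)"
  by (auto simp: plain_vmd_def)

lemma vmd_Cons:
  "vmd (t # D) \<Longrightarrow> plain_vmd D \<and> (t \<notin> {Void, Mono, Dimer, LBDimer} \<longrightarrow> D = [])"
  by (auto simp: vmd_def plain_vmd_Cons split: if_splits)

lemma vmd_appendD: "vmd (A @ B) \<Longrightarrow> vmd B"
  by (cases A) (auto simp: vmd_def plain_vmd_def butlast_append split: if_splits)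

lemma plain_vmd_not_prefix_11: "plain_vmd D \<Longrightarrow> content D \<noteq> True # True # r"
  by (cases D) (auto simp: plain_vmd_Cons elim!: word.elims split: if_splits)

fun undimer :: "tile \<Rightarrow> tile list" where
  "undimer Dimer = [Mono, Mono]"
| "undimer TDimer1 = [Mono, RMono1]"
| "undimer TDimer2 = [Mono, RMono2]"
| "undimer t = [t]"

definition root_of :: "tile list \<Rightarrow> tile list" where
  "root_of D = concat (map undimer D)"

lemma root_of_Nil [simp]: "root_of [] = []"
  by (simp add: root_of_def)

lemma root_of_Cons [simp]: "root_of (t # D) = undimer t @ root_of D"
  by (simp add: root_of_def)

lemma root_of_append [simp]: "root_of (A @ B) = root_of A @ root_of B"
  by (simp add: root_of_def)

lemma undimer_other [simp]: "t \<notin> {Dimer, TDimer1, TDimer2} \<Longrightarrow> undimer t = [t]"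
  by (cases t) auto

lemma length_content_root_of: "length (content (root_of D)) = length (content D)"
proof (induction D)
  case (Cons t D)
  then show ?case by (cases t) auto
qed simp

lemma derived_root_of: "derived (root_of D) D"
proof (induction D)
  case (Cons t D)
  then show ?case
    by (cases t) (auto intro: derived.intros)
qed (simp add: derived_Nil)

lemma derived_Nil_iff [simp]: "derived [] D \<longleftrightarrow> D = []"
  by (auto elim: derived.cases intro: derived.intros)

lemma derived_imp_root_of:
  "derived R D \<Longrightarrow> set R \<inter> {Dimer, TDimer1, TDimer2} = {} \<Longrightarrow> root_of D = R"
  by (induction rule: derived.induct) auto

lemma derived_plain_vmd: "derived R D \<Longrightarrow> plain_vmd R \<Longrightarrow> plain_vmd D"
  by (induction rule: derived.induct) (auto simp: plain_vmd_Cons split: if_splits)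

lemma derived_vmd: "derived R D \<Longrightarrow> vmd R \<Longrightarrow> vmd D"
  by (auto simp: vmd_def derived_plain_vmd elim: derived.cases)

lemma plain_vmd_root_of: "plain_vmd D \<Longrightarrow> plain_vmd (root_of D)"
proof (induction D)
  case (Cons t D)
  then show ?case by (cases t) (auto simp: plain_vmd_Cons split: if_splits)
qed simp

lemma vmd_root_of: "vmd D \<Longrightarrow> vmd (root_of D)"
  by (auto simp: vmd_def plain_vmd_root_of)

lemma root_of_dimer_free: "set (root_of D) \<inter> {Dimer, TDimer1, TDimer2} = {}"
proof (induction D)
  case (Cons t D)
  then show ?case by (cases t) auto
qed simp

lemma plain_root_split:
  assumes "plain_vmd R" "set R \<inter> {Dimer, TDimer1, TDimer2} = {}"
  shows "\<exists>m r. R = m @ r \<and> set m \<subseteq> {Void, Mono}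
    \<and> (r = [] \<or> r = [RDimer] \<or> r = [RMono1] \<or> r = [RMono2])"
proof (cases R rule: rev_cases)
  case (snoc m t)
  then have m: "set m \<subseteq> {Void, Mono}" and t: "t \<notin> {LBDimer, Dimer, TDimer1, TDimer2}"
    using assms by (auto simp: plain_vmd_def)
  show ?thesis
  proof (cases "t \<in> {Void, Mono}")
    case True
    then show ?thesis using snoc m by (intro exI[of _ R] exI[of _ "[]"]) auto
  next
    case False
    then show ?thesis using snoc m t by (intro exI[of _ m] exI[of _ "[t]"]) (cases t; auto)
  qed
qed simp

lemma is_root_iff: "is_root R \<longleftrightarrow> vmd R \<and> set R \<inter> {Dimer, TDimer1, TDimer2} = {}"
proof
  assume "is_root R"
  then obtain l m r where R: "R = l @ m @ r" "l = [] \<or> l = [LBDimer]" "set m \<subseteq> {Void, Mono}"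
    "r = [] \<or> r = [RDimer] \<or> r = [RMono1] \<or> r = [RMono2]"
    unfolding is_root_def by blast
  then have "plain_vmd (m @ r)"
    by (auto simp: plain_vmd_def butlast_append dest: in_set_butlastD)
  then show "vmd R \<and> set R \<inter> {Dimer, TDimer1, TDimer2} = {}"
    using R by (auto simp: vmd_def)
next
  assume "vmd R \<and> set R \<inter> {Dimer, TDimer1, TDimer2} = {}"
  then consider "plain_vmd R" | R' where "R = LBDimer # R'" "plain_vmd R'"
    and "set R' \<inter> {Dimer, TDimer1, TDimer2} = {}"
    by (auto simp: vmd_def)
  then show "is_root R"
    using plain_root_split \<open>vmd R \<and> _\<close> unfolding is_root_def
    by cases (metis append_Cons append_Nil)+
qed

lemma derived_iff: "is_root R \<Longrightarrow> derived R D \<longleftrightarrow> vmd D \<and> root_of D = R"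
  using derived_imp_root_of derived_vmd derived_root_of by (auto simp: is_root_iff)

lemma is_root_root_of: "vmd D \<Longrightarrow> is_root (root_of D)"
  by (simp add: is_root_iff vmd_root_of root_of_dimer_free)

section \<open>Decoding configurations\<close>

lemma plain_vmd_content_cases:
  assumes "plain_vmd D"
  obtains "content D = []" | c where "content D = False # c" | "content D = [True]"
  | c where "content D = True # False # c"
  using assms plain_vmd_not_prefix_11
  by (cases "content D" rule: remdups_adj.cases) (auto, metis)

text \<open>Greedy decoding; the result is meaningless unless the word is the content of a VMD tiling.\<close>

fun tiling_of :: "bool list \<Rightarrow> tile list" where
  "tiling_of [] = []"
| "tiling_of (True # s) =
    (if prefix [True, False, False, False] s then LBDimer # tiling_of (drop 4 s)
     else if s = [] then [RMono1] else if s = [False] then [RMono2]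
     else Mono # tiling_of (drop 2 s))"
| "tiling_of (False # s) =
    (if prefix [True, True, False, False, False] s then Dimer # tiling_of (drop 5 s)
     else if s = [True, True] then [RDimer] else if s = [True, True, False] then [TDimer1]
     else if s = [True, True, False, False] then [TDimer2] else Void # tiling_of s)"

lemma tiling_of_content_plain: "plain_vmd D \<Longrightarrow> tiling_of (content D) = D"
proof (induction D)
  case (Cons t D)
  then have D: "plain_vmd D" and last: "t \<notin> {Void, Mono, Dimer} \<Longrightarrow> D = []"
    by (auto simp: plain_vmd_Cons split: if_splits)
  show ?case
  proof (cases t)
    case Void
    from D show ?thesis
      by (rule plain_vmd_content_cases) (use Cons.IH[OF D] Void in auto)
  qed (use Cons.IH[OF D] last in auto)
qed simp

lemma tiling_of_content: "vmd D \<Longrightarrow> tiling_of (content D) = D"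
  by (auto simp: vmd_def tiling_of_content_plain)

abbreviation exceptional :: "bool list" where
  "exceptional \<equiv> [True, True, False, False, False, True, True]"

text \<open>
  101 and 111 are annihilated by n_x n_{x+2}; given \<lambda> \<noteq> 0, the relation 0110 = \<lambda> 1001 then
  kills 10011, 11001 and every proper extension of 1100011 (see \<open>ground_conds_vanish\<close>).
\<close>

definition forbidden :: "bool list set" where
  "forbidden = {[True, False, True], [True, True, True], [True, False, False, True, True],
     [True, True, False, False, True], exceptional}"

definition pattern_free :: "bool list \<Rightarrow> bool" where
  "pattern_free \<sigma> \<longleftrightarrow> (\<forall>P \<in> forbidden. \<not> sublist P \<sigma>)"

lemma pattern_free_Cons: "pattern_free (a # s) \<Longrightarrow> pattern_free s"
  by (auto simp: pattern_free_def sublist_Cons_right)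

lemma pattern_free_append: "pattern_free (u @ s) \<Longrightarrow> pattern_free s"
  by (induction u) (auto dest: pattern_free_Cons)

lemma pattern_free_no_prefix: "pattern_free \<sigma> \<Longrightarrow> P \<in> forbidden \<Longrightarrow> \<not> prefix P \<sigma>"
  by (auto simp: pattern_free_def)

lemma pattern_free_11:
  assumes "pattern_free (True # True # r)"
  shows "r \<in> {[], [False], [False, False]} \<or> (\<exists>r'. r = False # False # False # r')"
proof -
  have "\<not> prefix [True, True, True] (True # True # r)"
    and "\<not> prefix [True, True, False, False, True] (True # True # r)"
    and "\<not> prefix [True, False, True] (True # r)"
    using pattern_free_no_prefix[OF assms, of "[True, True, True]"]
      pattern_free_no_prefix[OF assms, of "[True, True, False, False, True]"]
      pattern_free_no_prefix[OF pattern_free_Cons[OF assms], of "[True, False, True]"]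
    by (simp_all add: forbidden_def)
  then show ?thesis
    by (cases r rule: remdups_adj.cases; cases "drop 2 r") auto
qed

lemma tiling_of_plain_vmd:
  "pattern_free \<sigma> \<Longrightarrow> \<not> prefix [True, True] \<sigma>
    \<Longrightarrow> plain_vmd (tiling_of \<sigma>) \<and> content (tiling_of \<sigma>) = \<sigma>"
proof (induction \<sigma> rule: tiling_of.induct)
  case (2 s)
  have no_101: "\<not> prefix [True, False, True] (True # s)"
    and no_10011: "\<not> prefix [True, False, False, True, True] (True # s)"
    using pattern_free_no_prefix[OF 2(3), of "[True, False, True]"]
      pattern_free_no_prefix[OF 2(3), of "[True, False, False, True, True]"]
    by (simp_all add: forbidden_def)
  consider "s = []" | "s = [False]" | s' where "s = False # False # s'"
    using 2(4) no_101 by (cases s rule: remdups_adj.cases) auto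
  then show ?case
  proof cases
    case 3
    have "pattern_free s'" "\<not> prefix [True, True] s'"
      using 2(3) no_10011 3 by (auto dest: pattern_free_Cons)
    then show ?thesis using 2(2) 3 by (simp add: plain_vmd_Cons)
  qed (auto simp: plain_vmd_Cons)
next
  case (3 s)
  have s: "pattern_free s"
    using 3(3) by (rule pattern_free_Cons)
  show ?case
  proof (cases "prefix [True, True, False, False, False] s")
    case True
    then obtain s' where s': "s = [True, True, False, False, False] @ s'"
      by (auto simp: prefix_def)
    have "pattern_free s'" "\<not> prefix [True, True] s'"
      using pattern_free_append[of "[True, True, False, False, False]"] s s'
        pattern_free_no_prefix[OF s, of exceptional]
      by (auto simp: forbidden_def)
    then show ?thesis using 3(1) s' by (simp add: plain_vmd_Cons)
  next
    case False
    then have "\<not> prefix [True, True] s \<or> s \<in> {[True, True], [True, True, False], [True, True, False, False]}"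
      using pattern_free_11[of "drop 2 s"] s by (cases s rule: remdups_adj.cases) auto
    then show ?thesis using 3(2) False s by (auto simp: plain_vmd_Cons)
  qed
qed simp

lemma tiling_of_vmd:
  assumes "pattern_free \<sigma>" "5 \<le> length \<sigma>"
  shows "vmd (tiling_of \<sigma>) \<and> content (tiling_of \<sigma>) = \<sigma>"
proof (cases "prefix [True, True] \<sigma>")
  case True
  then obtain r where r: "\<sigma> = True # True # r"
    by (auto simp: prefix_def)
  have "r \<notin> {[], [False], [False, False]}"
    using assms(2) r by auto
  then obtain s where s: "\<sigma> = [True, True, False, False, False] @ s"
    using pattern_free_11[of r] assms(1) r by auto
  have "pattern_free s" "\<not> prefix [True, True] s"
    using assms(1) pattern_free_append[of "[True, True, False, False, False]"]
      pattern_free_no_prefix[OF assms(1), of exceptional] s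
    by (auto simp: forbidden_def)
  then show ?thesis
    using tiling_of_plain_vmd s by (simp add: vmd_def)
next
  case False
  then show ?thesis
    using tiling_of_plain_vmd assms(1) by (simp add: vmd_def)
qed

definition tileable :: "bool list \<Rightarrow> bool" where
  "tileable \<sigma> \<longleftrightarrow> (\<exists>D. vmd D \<and> content D = \<sigma>)"

lemma tileable_iff_tiling_of: "tileable \<sigma> \<longleftrightarrow> vmd (tiling_of \<sigma>) \<and> content (tiling_of \<sigma>) = \<sigma>"
  using tiling_of_content unfolding tileable_def by metis

lemma vmd_content_eq_iff: "vmd D \<and> content D = \<sigma> \<longleftrightarrow> tileable \<sigma> \<and> D = tiling_of \<sigma>"
  using tiling_of_content tileable_iff_tiling_of by auto

lemma pattern_free_tileable: "pattern_free \<sigma> \<Longrightarrow> 5 \<le> length \<sigma> \<Longrightarrow> tileable \<sigma>"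
  using tiling_of_vmd tileable_iff_tiling_of by blast

section \<open>Local structure of VMD contents\<close>

lemma no_pattern_inside_tile:
  assumes "0 < k" "k < length (word t)" "drop k (word t) @ c = s"
    and "t \<notin> {Void, Mono, Dimer, LBDimer} \<Longrightarrow> c = []" "\<And>r. c \<noteq> True # True # r"
    and "prefix [False, True, True, False] s \<or> prefix [True, False, False, True] s
      \<or> prefix [True, b, True] s"
  shows False
  using assms
  by (cases t) (auto simp: less_Suc_eq numeral_eq_Suc prefix_def Cons_eq_append_conv)

lemma vmd_pattern_at_boundary:
  assumes "vmd D" "content D = pre @ s"
    and "prefix [False, True, True, False] s \<or> prefix [True, False, False, True] s
      \<or> prefix [True, b, True] s"
  shows "\<exists>A B. D = A @ B \<and> content A = pre"
  using assms(1,2)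
proof (induction D arbitrary: pre)
  case (Cons t D)
  have D: "plain_vmd D" "t \<notin> {Void, Mono, Dimer, LBDimer} \<Longrightarrow> D = []"
    using vmd_Cons[OF Cons.prems(1)] by auto
  have eq: "word t @ content D = pre @ s"
    using Cons.prems(2) by simp
  show ?case
  proof (cases "length (word t) \<le> length pre")
    case True
    then obtain pre' where "pre = word t @ pre'" "content D = pre' @ s"
      using eq by (auto simp: append_eq_append_conv_if intro: exI[of _ "drop (length (word t)) pre"])
        (metis append_take_drop_id)
    moreover obtain A B where "D = A @ B" "content A = pre'"
      using Cons.IH[of pre'] D(1) \<open>content D = pre' @ s\<close> by (auto simp: vmd_def)
    ultimately show ?thesis
      by (intro exI[of _ "t # A"] exI[of _ B]) simp
  next
    case False
    then have pre: "pre = take (length pre) (word t)" "drop (length pre) (word t) @ content D = s"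
      using eq by (auto simp: append_eq_append_conv_if)
    have last: "t \<notin> {Void, Mono, Dimer, LBDimer} \<Longrightarrow> content D = []"
      using D(2) by simp
    show ?thesis
    proof (cases "pre = []")
      case False
      then show ?thesis
        using no_pattern_inside_tile[OF _ _ pre(2) last plain_vmd_not_prefix_11[OF D(1)] assms(3)]
          \<open>\<not> length (word t) \<le> length pre\<close> by simp
    qed (rule exI[of _ "[]"], simp)
  qed
qed simp

lemma vmd_head_not_1b1: "vmd B \<Longrightarrow> \<not> prefix [True, b, True] (content B)"
proof (cases B)
  case (Cons t B')
  assume "vmd B"
  then show ?thesis
    using Cons vmd_Cons[of t B'] by (cases t) auto
qed simp

lemma vmd_content_not_1b1: "vmd D \<Longrightarrow> content D \<noteq> pre @ [True, b, True] @ post"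
  by (metis content_append vmd_appendD vmd_head_not_1b1 vmd_pattern_at_boundary
      prefixI same_append_eq)

lemma vmd_head_0110:
  assumes "vmd B" "prefix [False, True, True, False] (content B)"
  shows "\<exists>t B'. t \<in> {Dimer, TDimer1, TDimer2} \<and> B = t # B'"
proof (cases B)
  case (Cons t B')
  then show ?thesis
    using assms vmd_Cons[of t B'] plain_vmd_not_prefix_11[of B']
    by (cases t) (auto simp: prefix_def)
qed (use assms in simp)

lemma vmd_head_1001:
  assumes "vmd B" "prefix [True, False, False, True] (content B)"
  shows "\<exists>t B'. t \<in> {Dimer, TDimer1, TDimer2} \<and> B = undimer t @ B'"
proof (cases B)
  case (Cons t B1)
  have B1: "plain_vmd B1" "t \<notin> {Void, Mono, Dimer, LBDimer} \<Longrightarrow> B1 = []"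
    using vmd_Cons assms(1) Cons by auto
  then have "t = Mono" and "prefix [True] (content B1)"
    using assms(2) Cons by (cases t; auto simp: prefix_def)+
  moreover from this obtain t' B2 where "B1 = t' # B2"
    by (cases B1) (auto simp: prefix_def)
  moreover have "t' \<in> {Mono, RMono1, RMono2}"
    using B1(1) \<open>prefix [True] (content B1)\<close> \<open>B1 = t' # B2\<close>
    by (cases t') (auto simp: prefix_def plain_vmd_Cons split: if_splits)
  ultimately show ?thesis
    using Cons by (auto intro: exI[of _ Dimer] exI[of _ TDimer1] exI[of _ TDimer2])
qed (use assms in simp)

lemma dimer_tile_words:
  assumes "t \<in> {Dimer, TDimer1, TDimer2}"
  obtains r where "word t = [False, True, True, False] @ r" "content (undimer t) = [True, False, False, True] @ r"
  using assms by (intro that[of "drop 4 (word t)"]) auto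

lemma plain_vmd_undimer_iff:
  "t \<in> {Dimer, TDimer1, TDimer2} \<Longrightarrow> plain_vmd (A @ undimer t @ B) \<longleftrightarrow> plain_vmd (A @ t # B)"
  by (cases "B = []") (auto simp: plain_vmd_def butlast_append)

lemma vmd_undimer_iff:
  "t \<in> {Dimer, TDimer1, TDimer2} \<Longrightarrow> vmd (A @ undimer t @ B) \<longleftrightarrow> vmd (A @ t # B)"
  using plain_vmd_undimer_iff[of t A B] plain_vmd_undimer_iff[of t "tl A" B]
  by (cases A) (auto simp: vmd_def)

lemma tileable_dimer_move:
  assumes "tileable (pre @ [False, True, True, False] @ post)
    \<or> tileable (pre @ [True, False, False, True] @ post)"
  obtains A t B where "t \<in> {Dimer, TDimer1, TDimer2}"
    "vmd (A @ t # B)" "content (A @ t # B) = pre @ [False, True, True, False] @ post"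
    "vmd (A @ undimer t @ B)" "content (A @ undimer t @ B) = pre @ [True, False, False, True] @ post"
proof -
  from assms consider
      (dimer) D where "vmd D" "content D = pre @ [False, True, True, False] @ post"
    | (monomers) D where "vmd D" "content D = pre @ [True, False, False, True] @ post"
    by (auto simp: tileable_def)
  then show thesis
  proof cases
    case dimer
    then obtain A B where D: "D = A @ B" "content A = pre"
      using vmd_pattern_at_boundary[OF dimer] by auto
    with dimer have "vmd B" "content B = [False, True, True, False] @ post"
      using vmd_appendD by auto
    then obtain t B' where B: "B = t # B'" "t \<in> {Dimer, TDimer1, TDimer2}"
      using vmd_head_0110[OF \<open>vmd B\<close>] by (auto simp: prefix_def)
    moreover obtain r where "word t = [False, True, True, False] @ r"
      "content (undimer t) = [True, False, False, True] @ r"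
      using dimer_tile_words[OF B(2)] by blast
    ultimately show thesis
      using that[of t A B'] dimer D vmd_undimer_iff[OF B(2)] \<open>content B = _\<close> by auto
  next
    case monomers
    then obtain A B where D: "D = A @ B" "content A = pre"
      using vmd_pattern_at_boundary[OF monomers] by auto
    with monomers have "vmd B" "content B = [True, False, False, True] @ post"
      using vmd_appendD by auto
    then obtain t B' where B: "B = undimer t @ B'" "t \<in> {Dimer, TDimer1, TDimer2}"
      using vmd_head_1001[OF \<open>vmd B\<close>] by (auto simp: prefix_def)
    moreover obtain r where "word t = [False, True, True, False] @ r"
      "content (undimer t) = [True, False, False, True] @ r"
      using dimer_tile_words[OF B(2)] by blast
    ultimately show thesis
      using that[of t A B'] monomers D vmd_undimer_iff[OF B(2)] \<open>content B = _\<close> by auto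
  qed
qed

section \<open>The kernel of H as a system of local equations\<close>

text \<open>The combinatorial form of the equations n_x n_{x+2} \<psi> = 0 and q_x \<psi> = 0 for all x.\<close>

definition ground_conds :: "nat \<Rightarrow> complex \<Rightarrow> state \<Rightarrow> bool" where
  "ground_conds n lam \<psi> \<longleftrightarrow> \<psi> \<in> Hspace n
     \<and> (\<forall>pre b post. \<psi> (pre @ [True, b, True] @ post) = 0)
     \<and> (\<forall>pre post. \<psi> (pre @ [False, True, True, False] @ post)
          = lam * \<psi> (pre @ [True, False, False, True] @ post))"

lemma ground_condsD:
  assumes "ground_conds n lam \<psi>"
  shows "\<psi> \<in> Hspace n" "\<psi> (pre @ [True, b, True] @ post) = 0"
    "\<psi> (pre @ [False, True, True, False] @ post) = lam * \<psi> (pre @ [True, False, False, True] @ post)"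
  using assms unfolding ground_conds_def by blast+

lemma num_op_at:
  "num_op (length pre) (num_op (length pre + 2) \<psi>) (pre @ [a, b, c] @ post) =
    (if a \<and> c then \<psi> (pre @ [a, b, c] @ post) else 0)"
  by (simp add: num_op_def nth_append)

lemma q_op_at:
  "q_op lam (length pre) \<psi> (pre @ [a, b, c, d] @ post) =
    (if \<not> b \<and> \<not> c then \<psi> (pre @ [a, True, True, d] @ post) else 0)
    - lam * (if \<not> a \<and> \<not> d then \<psi> (pre @ [True, b, c, True] @ post) else 0)"
  by (simp add: q_op_def lower_op_def nth_append list_update_append)

lemma split_list_at3:
  assumes "x + 2 < length \<sigma>"
  obtains a b c post where "\<sigma> = take x \<sigma> @ [a, b, c] @ post"
proof -
  have "drop x \<sigma> = [\<sigma> ! x, \<sigma> ! (x + 1), \<sigma> ! (x + 2)] @ drop (x + 3) \<sigma>"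
    using assms by (simp add: Cons_nth_drop_Suc numeral_eq_Suc)
  then show thesis
    using that by (metis append_take_drop_id)
qed

lemma split_list_at4:
  assumes "x + 3 < length \<sigma>"
  obtains a b c d post where "\<sigma> = take x \<sigma> @ [a, b, c, d] @ post"
proof -
  have "drop x \<sigma> = [\<sigma> ! x, \<sigma> ! (x + 1), \<sigma> ! (x + 2), \<sigma> ! (x + 3)] @ drop (x + 4) \<sigma>"
    using assms by (simp add: Cons_nth_drop_Suc numeral_eq_Suc)
  then show thesis
    using that by (metis append_take_drop_id)
qed

lemma ground_conds_num_op:
  assumes "ground_conds n lam \<psi>"
  shows "num_op x (num_op (x + 2) \<psi>) \<sigma> = 0"
proof (cases "x + 2 < length \<sigma>")
  case True
  then obtain a b c post where \<sigma>: "\<sigma> = take x \<sigma> @ [a, b, c] @ post"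
    by (rule split_list_at3)
  have "num_op x (num_op (x + 2) \<psi>) \<sigma>
      = num_op (length (take x \<sigma>)) (num_op (length (take x \<sigma>) + 2) \<psi>) (take x \<sigma> @ [a, b, c] @ post)"
    using True \<sigma> by simp
  then show ?thesis
    using assms by (simp only: num_op_at) (auto simp: ground_conds_def)
qed (simp add: num_op_def)

lemma ground_conds_q_op:
  assumes "ground_conds n lam \<psi>" "x + 3 < n"
  shows "q_op lam x \<psi> \<tau> = 0"
proof (cases "length \<tau> = n")
  case True
  have zero: "\<psi> (pre @ [True, b, True] @ post) = 0"
    and move: "\<psi> (pre @ [False, True, True, False] @ post) = lam * \<psi> (pre @ [True, False, False, True] @ post)"
    for pre b post using assms(1) by (auto simp: ground_conds_def)
  obtain a b c d post where \<tau>: "\<tau> = take x \<tau> @ [a, b, c, d] @ post"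
    using split_list_at4 True assms(2) by metis
  let ?pre = "take x \<tau>"
  have "\<psi> (?pre @ [a, True, True, d] @ post) = 0" if "a \<or> d"
    using that zero[of ?pre True "d # post"] zero[of "?pre @ [a]" True post] by (cases a) auto
  moreover have "\<psi> (?pre @ [True, b, c, True] @ post) = 0" if "b \<or> c"
    using that zero[of "?pre @ [True]" c post] zero[of ?pre b "True # post"] by (cases b) auto
  moreover have "q_op lam x \<psi> \<tau> = q_op lam (length ?pre) \<psi> (?pre @ [a, b, c, d] @ post)"
    using True assms(2) \<tau> by simp
  ultimately show ?thesis
    using move[of ?pre post] by (simp only: q_op_at) auto
next
  case False
  then show ?thesis
    using assms(1) by (simp add: q_op_def lower_op_def ground_conds_def Hspace_def)
qed

lemma ground_conds_imp_kerH:
  assumes "ground_conds n lam \<psi>"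
  shows "\<psi> \<in> kerH n \<kappa> lam"
proof -
  have "q_op lam x \<psi> = (\<lambda>_. 0)" if "x < n - 3" for x
    using ground_conds_q_op[OF assms] that by fastforce
  then have "qstar_op lam x (q_op lam x \<psi>) \<sigma> = 0" if "x < n - 3" for x \<sigma>
    using that by (simp add: qstar_op_def raise_op_def)
  then have "Ham n \<kappa> lam \<psi> = (\<lambda>_. 0)"
    using ground_conds_num_op[OF assms] by (simp add: Ham_def)
  then show ?thesis
    using assms by (simp add: kerH_def ground_conds_def)
qed

definition cinner :: "nat \<Rightarrow> state \<Rightarrow> state \<Rightarrow> complex" where
  "cinner n \<phi> \<chi> = (\<Sum>\<sigma>\<in>{\<sigma>. length \<sigma> = n}. cnj (\<phi> \<sigma>) * \<chi> \<sigma>)"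

lemma finite_lists_of_length [simp]: "finite {\<sigma> :: bool list. length \<sigma> = n}"
  using finite_lists_length_eq[of "UNIV :: bool set" n] by simp

lemma cinner_raise_op: "cinner n \<phi> (raise_op y \<chi>) = cinner n (lower_op y \<phi>) \<chi>"
proof -
  have update_True: "\<sigma> ! i \<Longrightarrow> \<sigma>[i := True] = \<sigma>"
    and update_False: "\<not> \<sigma> ! i \<Longrightarrow> \<sigma>[i := False] = \<sigma>" for \<sigma> :: "bool list" and i
    by (metis (full_types) list_update_id)+
  let ?L = "{\<sigma> :: bool list. length \<sigma> = n}"
  let ?S = "{\<sigma> \<in> ?L. y < length \<sigma> \<and> \<sigma> ! y}" and ?T = "{\<sigma> \<in> ?L. y < length \<sigma> \<and> \<not> \<sigma> ! y}"
  have "cinner n \<phi> (raise_op y \<chi>)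
      = (\<Sum>\<sigma>\<in>?L. if y < length \<sigma> \<and> \<sigma> ! y then cnj (\<phi> \<sigma>) * \<chi> (\<sigma>[y := False]) else 0)"
    unfolding cinner_def raise_op_def by (rule sum.cong) auto
  also have "\<dots> = (\<Sum>\<sigma>\<in>?S. cnj (\<phi> \<sigma>) * \<chi> (\<sigma>[y := False]))"
    by (rule sum.inter_filter[symmetric]) simp
  also have "\<dots> = (\<Sum>\<tau>\<in>?T. cnj (\<phi> (\<tau>[y := True])) * \<chi> \<tau>)"
    by (rule sum.reindex_bij_witness[of _ "\<lambda>\<tau>. \<tau>[y := True]" "\<lambda>\<sigma>. \<sigma>[y := False]"])
      (auto simp: update_True update_False)
  also have "\<dots> = (\<Sum>\<tau>\<in>?L. if y < length \<tau> \<and> \<not> \<tau> ! y then cnj (\<phi> (\<tau>[y := True])) * \<chi> \<tau> else 0)"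
    by (rule sum.inter_filter) simp
  also have "\<dots> = cinner n (lower_op y \<phi>) \<chi>"
    unfolding cinner_def lower_op_def by (rule sum.cong) auto
  finally show ?thesis .
qed

lemma cinner_diff_right: "cinner n \<psi> (\<lambda>\<sigma>. A \<sigma> - c * B \<sigma>) = cinner n \<psi> A - c * cinner n \<psi> B"
  unfolding cinner_def by (simp add: right_diff_distrib sum_subtractf sum_distrib_left mult.left_commute)

lemma cinner_diff_left: "cinner n (\<lambda>\<sigma>. A \<sigma> - c * B \<sigma>) \<phi> = cinner n A \<phi> - cnj c * cinner n B \<phi>"
  unfolding cinner_def by (simp add: left_diff_distrib sum_subtractf sum_distrib_left mult.assoc)

lemma cinner_qstar_op: "cinner n \<psi> (qstar_op lam x \<phi>) = cinner n (q_op lam x \<psi>) \<phi>"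
  unfolding qstar_op_def q_op_def cinner_diff_right cinner_diff_left cinner_raise_op ..

lemma cinner_self: "cinner n \<phi> \<phi> = complex_of_real (\<Sum>\<sigma> | length \<sigma> = n. (cmod (\<phi> \<sigma>))\<^sup>2)"
  unfolding cinner_def of_real_sum
  by (rule sum.cong[OF refl]) (subst complex_norm_square, rule mult.commute)

lemma cinner_num_op:
  "cinner n \<psi> (num_op x (num_op (x + 2) \<psi>))
    = cinner n (num_op x (num_op (x + 2) \<psi>)) (num_op x (num_op (x + 2) \<psi>))"
  unfolding cinner_def by (rule sum.cong) (auto simp: num_op_def)

lemma cinner_Ham:
  "cinner n \<psi> (Ham n \<kappa> lam \<psi>) = complex_of_real
     ((\<Sum>x<n - 2. \<Sum>\<sigma> | length \<sigma> = n. (cmod (num_op x (num_op (x + 2) \<psi>) \<sigma>))\<^sup>2)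
      + \<kappa> * (\<Sum>x<n - 3. \<Sum>\<sigma> | length \<sigma> = n. (cmod (q_op lam x \<psi> \<sigma>))\<^sup>2))"
proof -
  have "cinner n \<psi> (Ham n \<kappa> lam \<psi>) = (\<Sum>x<n - 2. cinner n \<psi> (num_op x (num_op (x + 2) \<psi>)))
      + complex_of_real \<kappa> * (\<Sum>x<n - 3. cinner n \<psi> (qstar_op lam x (q_op lam x \<psi>)))"
    unfolding cinner_def Ham_def
    by (simp add: distrib_left sum.distrib sum_distrib_left mult.left_commute sum.swap[of _ "{..<_}"])
  then show ?thesis
    unfolding cinner_num_op cinner_qstar_op cinner_self by (simp add: of_real_sum)
qed

lemma kerH_imp_ground_conds:
  assumes "\<kappa> > 0" "\<psi> \<in> kerH n \<kappa> lam"
  shows "ground_conds n lam \<psi>"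
proof -
  let ?L = "{\<sigma> :: bool list. length \<sigma> = n}"
  define a where "a x = (\<Sum>\<sigma>\<in>?L. (cmod (num_op x (num_op (x + 2) \<psi>) \<sigma>))\<^sup>2)" for x
  define b where "b x = (\<Sum>\<sigma>\<in>?L. (cmod (q_op lam x \<psi> \<sigma>))\<^sup>2)" for x
  have H: "\<psi> \<in> Hspace n" and "Ham n \<kappa> lam \<psi> = (\<lambda>_. 0)"
    using assms(2) by (auto simp: kerH_def)
  then have "complex_of_real ((\<Sum>x<n - 2. a x) + \<kappa> * (\<Sum>x<n - 3. b x)) = 0"
    using cinner_Ham[of n \<psi> \<kappa> lam] by (simp add: a_def b_def cinner_def)
  moreover have a: "0 \<le> a x" and b: "0 \<le> b x" for x
    by (auto simp: a_def b_def intro: sum_nonneg)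
  ultimately have "(\<Sum>x<n - 2. a x) = 0" "(\<Sum>x<n - 3. b x) = 0"
    using assms(1) by (smt (verit) mult_pos_pos of_real_eq_0_iff sum_nonneg mult_nonneg_nonneg)+
  then have a0: "a x = 0" if "x < n - 2" for x
    using that a by (simp add: sum_nonneg_eq_0_iff)
  have b0: "b x = 0" if "x < n - 3" for x
    using that b \<open>(\<Sum>x<n - 3. b x) = 0\<close> by (simp add: sum_nonneg_eq_0_iff)
  have num0: "num_op x (num_op (x + 2) \<psi>) \<sigma> = 0" if "x < n - 2" "length \<sigma> = n" for x \<sigma>
    using a0[OF that(1)] that(2) by (simp add: a_def sum_nonneg_eq_0_iff)
  have q0: "q_op lam x \<psi> \<sigma> = 0" if "x < n - 3" "length \<sigma> = n" for x \<sigma>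
    using b0[OF that(1)] that(2) by (simp add: b_def sum_nonneg_eq_0_iff)
  have "\<psi> (pre @ [True, b, True] @ post) = 0" for pre b post
    using num0[of "length pre" "pre @ [True, b, True] @ post"] num_op_at[of pre \<psi> True b True post] H
    by (cases "length (pre @ [True, b, True] @ post) = n") (auto simp: Hspace_def)
  moreover have "\<psi> (pre @ [False, True, True, False] @ post) = lam * \<psi> (pre @ [True, False, False, True] @ post)"
    for pre post
    using q0[of "length pre" "pre @ [False, False, False, False] @ post"]
      q_op_at[of lam pre \<psi> False False False False post] H
    by (cases "length (pre @ [False, False, False, False] @ post) = n") (auto simp: Hspace_def)
  ultimately show ?thesis
    using H by (simp add: ground_conds_def)
qed

lemma kerH_eq_ground_conds: "\<kappa> > 0 \<Longrightarrow> kerH n \<kappa> lam = {\<psi>. ground_conds n lam \<psi>}"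
  using kerH_imp_ground_conds ground_conds_imp_kerH by blast

lemma derived_length_le: "derived R D \<Longrightarrow> length D \<le> length R"
  by (induction rule: derived.induct) auto

lemma finite_UNIV_tile: "finite (UNIV :: tile set)"
proof -
  have "(UNIV :: tile set) = {Void, Mono, Dimer, LBDimer, RDimer, RMono1, RMono2, TDimer1, TDimer2}"
    by (auto intro: tile.exhaust)
  then show ?thesis
    by (metis finite.emptyI finite_insert)
qed

lemma finite_derived: "finite {D. derived R D}"
proof (rule finite_subset)
  show "{D. derived R D} \<subseteq> {D. set D \<subseteq> UNIV \<and> length D \<le> length R}"
    by (auto dest: derived_length_le)
  show "finite {D :: tile list. set D \<subseteq> UNIV \<and> length D \<le> length R}"
    by (rule finite_lists_length_le) (rule finite_UNIV_tile)
qed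

lemma length_le_length_content: "length D \<le> length (content D)"
proof (induction D)
  case (Cons t D)
  obtain b w where "word t = b # w"
    using word_ne_Nil by (metis list.exhaust)
  with Cons show ?case
    by simp
qed simp

lemma finite_roots: "finite (roots n)"
proof (rule finite_subset)
  show "roots n \<subseteq> {R. set R \<subseteq> UNIV \<and> length R \<le> n}"
    using length_le_length_content by (auto simp: roots_def)
  show "finite {R :: tile list. set R \<subseteq> UNIV \<and> length R \<le> n}"
    by (rule finite_lists_length_le) (rule finite_UNIV_tile)
qed

lemma psi_eq:
  assumes "is_root R"
  shows "psi lam R \<sigma> = (if tileable \<sigma> \<and> root_of (tiling_of \<sigma>) = R then lam ^ ndimers (tiling_of \<sigma>) else 0)"
proof -
  have "psi lam R \<sigma> = (\<Sum>D\<in>{D. derived R D}.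
      if D = tiling_of \<sigma> then (if tileable \<sigma> then lam ^ ndimers D else 0) else 0)"
    unfolding psi_def using vmd_content_eq_iff derived_iff[OF assms]
    by (intro sum.cong) auto
  also have "\<dots> = (if tileable \<sigma> \<and> root_of (tiling_of \<sigma>) = R then lam ^ ndimers (tiling_of \<sigma>) else 0)"
    by (subst sum.delta[OF finite_derived]) (auto simp: derived_iff[OF assms] tileable_iff_tiling_of)
  finally show ?thesis .
qed

lemma root_of_undimer: "t \<in> {Dimer, TDimer1, TDimer2} \<Longrightarrow> root_of (undimer t) = undimer t"
  by auto

lemma ndimers_undimer: "t \<in> {Dimer, TDimer1, TDimer2} \<Longrightarrow> ndimers (undimer t) = 0"
  by auto

lemma psi_dimer_move:
  assumes "is_root R"
  shows "psi lam R (pre @ [False, True, True, False] @ post)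
    = lam * psi lam R (pre @ [True, False, False, True] @ post)" (is "psi lam R ?\<sigma>0 = _ * psi lam R ?\<sigma>1")
proof (cases "tileable ?\<sigma>0 \<or> tileable ?\<sigma>1")
  case True
  then obtain A t B where t: "t \<in> {Dimer, TDimer1, TDimer2}"
    and D0: "vmd (A @ t # B)" "content (A @ t # B) = ?\<sigma>0"
    and D1: "vmd (A @ undimer t @ B)" "content (A @ undimer t @ B) = ?\<sigma>1"
    by (rule tileable_dimer_move)
  then have "tileable ?\<sigma>0" "tiling_of ?\<sigma>0 = A @ t # B"
    and "tileable ?\<sigma>1" "tiling_of ?\<sigma>1 = A @ undimer t @ B"
    using tiling_of_content[OF D0(1)] tiling_of_content[OF D1(1)] unfolding tileable_def
    by auto
  moreover have "root_of (A @ undimer t @ B) = root_of (A @ t # B)"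
    and "ndimers (A @ t # B) = Suc (ndimers (A @ undimer t @ B))"
    using t by (auto simp: root_of_undimer ndimers_undimer)
  ultimately show ?thesis
    by (simp add: psi_eq[OF assms])
next
  case False
  then show ?thesis
    by (simp add: psi_eq[OF assms])
qed

lemma psi_ground_conds:
  assumes "R \<in> roots n"
  shows "ground_conds n lam (psi lam R)"
proof -
  have R: "is_root R" "length (content R) = n"
    using assms by (auto simp: roots_def)
  have "length \<sigma> = n" if "psi lam R \<sigma> \<noteq> 0" for \<sigma>
  proof -
    from that have "tileable \<sigma>" "root_of (tiling_of \<sigma>) = R"
      by (auto simp: psi_eq[OF R(1)] split: if_splits)
    then show ?thesis
      using R(2) length_content_root_of[of "tiling_of \<sigma>"] tileable_iff_tiling_of by metis
  qed
  then have "psi lam R \<in> Hspace n"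
    unfolding Hspace_def by blast
  moreover have "psi lam R (pre @ [True, b, True] @ post) = 0" for pre b post
  proof -
    have "\<not> tileable (pre @ [True, b, True] @ post)"
      unfolding tileable_def using vmd_content_not_1b1 by blast
    then show ?thesis
      by (simp add: psi_eq[OF R(1)])
  qed
  moreover note psi_dimer_move[OF R(1)]
  ultimately show ?thesis
    by (simp add: ground_conds_def)
qed

lemma exceptional_not_sublist:
  "\<not> sublist [True, b, True] exceptional"
  "\<not> sublist [False, True, True, False] exceptional"
  "\<not> sublist [True, False, False, True] exceptional"
  by (simp_all add: sublist_Cons_right)

lemma ket_exceptional_ground_conds: "ground_conds 7 lam (ket exceptional)"
proof -
  have "pre @ [True, b, True] @ post \<noteq> exceptional"
    and "pre @ [False, True, True, False] @ post \<noteq> exceptional"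
    and "pre @ [True, False, False, True] @ post \<noteq> exceptional" for pre b post
    using exceptional_not_sublist sublist_appendI by metis+
  then show ?thesis
    by (simp add: ground_conds_def Hspace_def ket_def)
qed

lemma exceptional_not_tileable: "\<not> tileable exceptional"
proof
  assume "tileable exceptional"
  then obtain D where "vmd D" "content D = exceptional"
    by (auto simp: tileable_def)
  then show False
    using plain_vmd_not_prefix_11 by (auto simp: vmd_def)
qed

section \<open>Expansion of ground states\<close>

lemma ground_conds_tile_weight:
  assumes "ground_conds n lam \<psi>"
  shows "\<psi> (pre @ word t @ rest) * lam ^ ndimers (undimer t)
    = lam ^ ndimers [t] * \<psi> (pre @ content (undimer t) @ rest)"
proof (cases "t \<in> {Dimer, TDimer1, TDimer2}")
  case True
  then obtain r where "word t = [False, True, True, False] @ r"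
    "content (undimer t) = [True, False, False, True] @ r"
    by (rule dimer_tile_words)
  then show ?thesis
    using assms True by (auto simp: ground_conds_def ndimers_undimer)
qed simp

lemma ground_conds_weight:
  assumes "ground_conds n lam \<psi>"
  shows "\<psi> (pre @ content D) * lam ^ ndimers (root_of D) = lam ^ ndimers D * \<psi> (pre @ content (root_of D))"
proof (induction D arbitrary: pre)
  case (Cons t D)
  have "\<psi> (pre @ content (t # D)) * lam ^ ndimers (root_of (t # D))
      = lam ^ ndimers D * (\<psi> (pre @ word t @ content (root_of D)) * lam ^ ndimers (undimer t))"
    using Cons.IH[of "pre @ word t"] by (simp add: power_add mult_ac)
  also have "\<dots> = lam ^ ndimers (t # D) * \<psi> (pre @ content (root_of (t # D)))"
    using ground_conds_tile_weight[OF assms] by (simp add: power_add mult_ac)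
  finally show ?case .
qed simp

lemma ground_conds_10011:
  assumes "ground_conds n lam \<psi>" "lam \<noteq> 0"
  shows "\<psi> (pre @ [True, False, False, True, True] @ post) = 0"
proof -
  have "lam * \<psi> (pre @ [True, False, False, True] @ True # post)
      = \<psi> (pre @ [False, True, True, False] @ True # post)"
    by (rule ground_condsD(3)[OF assms(1), symmetric])
  also have "\<dots> = \<psi> ((pre @ [False, True]) @ [True, False, True] @ post)"
    by simp
  also have "\<dots> = 0"
    by (rule ground_condsD(2)[OF assms(1)])
  finally show ?thesis
    using assms(2) by simp
qed

lemma ground_conds_11001:
  assumes "ground_conds n lam \<psi>" "lam \<noteq> 0"
  shows "\<psi> (pre @ [True, True, False, False, True] @ post) = 0"
proof -
  have "lam * \<psi> ((pre @ [True]) @ [True, False, False, True] @ post)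
      = \<psi> ((pre @ [True]) @ [False, True, True, False] @ post)"
    by (rule ground_condsD(3)[OF assms(1), symmetric])
  also have "\<dots> = \<psi> (pre @ [True, False, True] @ [True, False] @ post)"
    by simp
  also have "\<dots> = 0"
    by (rule ground_condsD(2)[OF assms(1)])
  finally show ?thesis
    using assms(2) by simp
qed

lemma ground_conds_exceptional_Cons:
  assumes "ground_conds n lam \<psi>" "lam \<noteq> 0"
  shows "\<psi> (pre @ exceptional @ b # post) = 0"
proof (cases b)
  case True
  then show ?thesis
    using ground_condsD(2)[OF assms(1), of "pre @ [True, True, False, False, False]" True post]
    by simp
next
  case False
  have "\<psi> ((pre @ [True, True, False, False]) @ [False, True, True, False] @ post)
      = lam * \<psi> ((pre @ [True, True, False, False]) @ [True, False, False, True] @ post)"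
    by (rule ground_condsD(3)[OF assms(1)])
  also have "\<dots> = 0"
    using ground_conds_11001[OF assms, of pre "[False, False, True] @ post"] by simp
  finally show ?thesis
    using False by simp
qed

lemma ground_conds_snoc_exceptional:
  assumes "ground_conds n lam \<psi>" "lam \<noteq> 0"
  shows "\<psi> ((pre @ [b]) @ exceptional @ post) = 0"
proof (cases b)
  case True
  then show ?thesis
    using ground_condsD(2)[OF assms(1), of pre True "[False, False, False, True, True] @ post"]
    by simp
next
  case False
  have "\<psi> (pre @ [False, True, True, False] @ [False, False, True, True] @ post)
      = lam * \<psi> (pre @ [True, False, False, True] @ [False, False, True, True] @ post)"
    by (rule ground_condsD(3)[OF assms(1)])
  also have "\<dots> = 0"
    using ground_conds_10011[OF assms, of "pre @ [True, False, False]" post] by simp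
  finally show ?thesis
    using False by simp
qed

lemma ground_conds_vanish:
  assumes "ground_conds n lam \<psi>" "lam \<noteq> 0" "\<not> pattern_free \<sigma>" "\<sigma> \<noteq> exceptional"
  shows "\<psi> \<sigma> = 0"
proof -
  obtain P pre post where P: "P \<in> forbidden" and \<sigma>: "\<sigma> = pre @ P @ post"
    using assms(3) by (auto simp: pattern_free_def sublist_def)
  show ?thesis
  proof (cases "P = exceptional")
    case True
    show ?thesis
    proof (cases post)
      case Nil
      with assms(4) \<sigma> True obtain pre' b where "pre = pre' @ [b]"
        by (cases pre rule: rev_cases) auto
      then show ?thesis
        using ground_conds_snoc_exceptional[OF assms(1,2)] \<sigma> True by simp
    next
      case Cons
      then show ?thesis
        using ground_conds_exceptional_Cons[OF assms(1,2)] \<sigma> True by simp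
    qed
  next
    case False
    then show ?thesis
      using P \<sigma> ground_condsD(2)[OF assms(1)] ground_conds_10011[OF assms(1,2)]
        ground_conds_11001[OF assms(1,2)]
      by (auto simp: forbidden_def)
  qed
qed

lemma sum_roots_psi_tileable:
  assumes "tileable \<sigma>" "length \<sigma> = n"
  shows "(\<Sum>R\<in>roots n. c R * psi lam R \<sigma>) = c (root_of (tiling_of \<sigma>)) * lam ^ ndimers (tiling_of \<sigma>)"
proof -
  let ?R0 = "root_of (tiling_of \<sigma>)"
  have D: "vmd (tiling_of \<sigma>)" "content (tiling_of \<sigma>) = \<sigma>"
    using assms(1) tileable_iff_tiling_of by auto
  have R0: "?R0 \<in> roots n"
    using is_root_root_of[OF D(1)] length_content_root_of[of "tiling_of \<sigma>"] D(2) assms(2)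
    by (simp add: roots_def)
  have "(\<Sum>R\<in>roots n. c R * psi lam R \<sigma>)
      = (\<Sum>R\<in>roots n. if R = ?R0 then c R * lam ^ ndimers (tiling_of \<sigma>) else 0)"
    using assms(1) by (intro sum.cong) (auto simp: roots_def psi_eq)
  also have "\<dots> = c ?R0 * lam ^ ndimers (tiling_of \<sigma>)"
    using R0 finite_roots by simp
  finally show ?thesis .
qed

lemma ground_conds_expansion:
  assumes "ground_conds n lam \<psi>" "lam \<noteq> 0" "5 \<le> n"
  shows "\<psi> \<sigma> = (\<Sum>R\<in>roots n. \<psi> (content R) / lam ^ ndimers R * psi lam R \<sigma>)
    + \<psi> exceptional * ket exceptional \<sigma>"
proof (cases "length \<sigma> = n")
  case False
  then have "psi lam R \<sigma> = 0" if "R \<in> roots n" for R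
    using ground_condsD(1)[OF psi_ground_conds[OF that]] by (simp add: Hspace_def)
  moreover have "\<psi> \<sigma> = 0"
    using ground_condsD(1)[OF assms(1)] False by (simp add: Hspace_def)
  ultimately show ?thesis
    by (auto simp: ket_def)
next
  case len: True
  show ?thesis
  proof (cases "tileable \<sigma>")
    case True
    define D where "D = tiling_of \<sigma>"
    have "content D = \<sigma>"
      using True by (simp add: tileable_iff_tiling_of D_def)
    then have "\<psi> \<sigma> * lam ^ ndimers (root_of D) = lam ^ ndimers D * \<psi> (content (root_of D))"
      using ground_conds_weight[OF assms(1), of "[]" D] by simp
    then have "\<psi> \<sigma> = \<psi> (content (root_of D)) / lam ^ ndimers (root_of D) * lam ^ ndimers D"
      using assms(2) by (simp add: field_simps)
    moreover have "(\<Sum>R\<in>roots n. \<psi> (content R) / lam ^ ndimers R * psi lam R \<sigma>)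
        = \<psi> (content (root_of D)) / lam ^ ndimers (root_of D) * lam ^ ndimers D"
      unfolding D_def by (rule sum_roots_psi_tileable[OF True len])
    moreover have "ket exceptional \<sigma> = 0"
      using True exceptional_not_tileable by (auto simp: ket_def)
    ultimately show ?thesis
      by simp
  next
    case False
    then have "psi lam R \<sigma> = 0" if "R \<in> roots n" for R
      using that by (simp add: roots_def psi_eq)
    moreover have "\<psi> \<sigma> = 0" if "\<sigma> \<noteq> exceptional"
      using ground_conds_vanish[OF assms(1,2) _ that] pattern_free_tileable False len assms(3)
      by blast
    ultimately show ?thesis
      by (auto simp: ket_def)
  qed
qed

lemma cspan_zero: "(\<lambda>_. 0) \<in> cspan S"
  unfolding cspan_def by (auto intro: exI[of _ "{}"])

lemma cspan_superset: "u \<in> S \<Longrightarrow> u \<in> cspan S"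
  unfolding cspan_def by (auto intro!: exI[of _ "{u}"] exI[of _ "\<lambda>_. 1"])

lemma cspan_smult: "v \<in> cspan S \<Longrightarrow> (\<lambda>\<sigma>. a * v \<sigma>) \<in> cspan S"
  unfolding cspan_def
  by (auto simp: sum_distrib_left mult.assoc intro!: exI[of _ "\<lambda>u. a * _ u"])

lemma cspan_add:
  assumes "v \<in> cspan S" "w \<in> cspan S"
  shows "(\<lambda>\<sigma>. v \<sigma> + w \<sigma>) \<in> cspan S"
proof -
  obtain F1 c1 F2 c2 where F1: "finite F1" "F1 \<subseteq> S" "v = (\<lambda>\<sigma>. \<Sum>u\<in>F1. c1 u * u \<sigma>)"
    and F2: "finite F2" "F2 \<subseteq> S" "w = (\<lambda>\<sigma>. \<Sum>u\<in>F2. c2 u * u \<sigma>)"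
    using assms unfolding cspan_def by blast
  define c where "c u = (if u \<in> F1 then c1 u else 0) + (if u \<in> F2 then c2 u else 0)" for u
  have "(\<lambda>\<sigma>. v \<sigma> + w \<sigma>) = (\<lambda>\<sigma>. \<Sum>u\<in>F1 \<union> F2. c u * u \<sigma>)"
  proof
    fix \<sigma>
    have "(\<Sum>u\<in>F1 \<union> F2. c u * u \<sigma>) = (\<Sum>u\<in>F1 \<union> F2. if u \<in> F1 then c1 u * u \<sigma> else 0)
        + (\<Sum>u\<in>F1 \<union> F2. if u \<in> F2 then c2 u * u \<sigma> else 0)"
      unfolding sum.distrib[symmetric] by (rule sum.cong) (auto simp: c_def distrib_right)
    also have "\<dots> = v \<sigma> + w \<sigma>"
      using F1 F2 by (simp add: Un_Int_eq flip: sum.inter_restrict)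
    finally show "v \<sigma> + w \<sigma> = (\<Sum>u\<in>F1 \<union> F2. c u * u \<sigma>)" ..
  qed
  then show ?thesis
    using F1 F2 unfolding cspan_def by (auto intro!: exI[of _ "F1 \<union> F2"] exI[of _ c])
qed

lemma cspan_sum:
  "finite A \<Longrightarrow> (\<And>a. a \<in> A \<Longrightarrow> g a \<in> cspan S) \<Longrightarrow> (\<lambda>\<sigma>. \<Sum>a\<in>A. f a * g a \<sigma>) \<in> cspan S"
proof (induction A rule: finite_induct)
  case (insert a A)
  then have "(\<lambda>\<sigma>. f a * g a \<sigma> + (\<Sum>a\<in>A. f a * g a \<sigma>)) \<in> cspan S"
    by (intro cspan_add cspan_smult) auto
  then show ?case
    using insert by simp
qed (simp add: cspan_zero)

lemma cspan_singleton: "v \<in> cspan {u} \<Longrightarrow> \<exists>c. v = (\<lambda>\<sigma>. c * u \<sigma>)"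
  unfolding cspan_def by (auto simp: subset_singleton_iff intro: exI[of _ 0])

lemma ground_conds_cspan:
  assumes "\<And>u. u \<in> S \<Longrightarrow> ground_conds n lam u" "v \<in> cspan S"
  shows "ground_conds n lam v"
proof -
  obtain F c where F: "finite F" "F \<subseteq> S" "v = (\<lambda>\<sigma>. \<Sum>u\<in>F. c u * u \<sigma>)"
    using assms(2) unfolding cspan_def by blast
  have u: "ground_conds n lam u" if "u \<in> F" for u
    using assms(1) F(2) that by blast
  show ?thesis
    unfolding ground_conds_def Hspace_def F(3) sum_distrib_left
    using ground_condsD[OF u] by (auto simp: Hspace_def intro!: sum.neutral sum.cong)
qed

lemma Gspace_ground_conds: "v \<in> Gspace n lam \<Longrightarrow> ground_conds n lam v"
  unfolding Gspace_def by (rule ground_conds_cspan) (auto intro: psi_ground_conds)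

lemma expansion_in_Gspace: "(\<lambda>\<sigma>. \<Sum>R\<in>roots n. c R * psi lam R \<sigma>) \<in> Gspace n lam"
  unfolding Gspace_def by (rule cspan_sum[OF finite_roots]) (simp add: cspan_superset)

lemma kerH_eq_Gspace:
  assumes "\<kappa> > 0" "lam \<noteq> 0" "5 \<le> n" "n \<noteq> 7"
  shows "kerH n \<kappa> lam = Gspace n lam"
proof
  show "kerH n \<kappa> lam \<subseteq> Gspace n lam"
  proof
    fix \<psi> assume "\<psi> \<in> kerH n \<kappa> lam"
    then have \<psi>: "ground_conds n lam \<psi>"
      using kerH_eq_ground_conds[OF assms(1)] by blast
    then have "\<psi> exceptional = 0"
      using ground_condsD(1) assms(4) by (simp add: Hspace_def)
    have "\<psi> = (\<lambda>\<sigma>. \<Sum>R\<in>roots n. \<psi> (content R) / lam ^ ndimers R * psi lam R \<sigma>)"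
    proof
      fix \<sigma>
      from ground_conds_expansion[OF \<psi> assms(2,3), of \<sigma>] \<open>\<psi> exceptional = 0\<close>
      show "\<psi> \<sigma> = (\<Sum>R\<in>roots n. \<psi> (content R) / lam ^ ndimers R * psi lam R \<sigma>)"
        by simp
    qed
    also have "\<dots> \<in> Gspace n lam"
      by (rule expansion_in_Gspace)
    finally show "\<psi> \<in> Gspace n lam" .
  qed
  show "Gspace n lam \<subseteq> kerH n \<kappa> lam"
  proof
    fix v assume "v \<in> Gspace n lam"
    then show "v \<in> kerH n \<kappa> lam"
      by (rule ground_conds_imp_kerH[OF Gspace_ground_conds])
  qed
qed

lemma kerH_7_eq:
  assumes "\<kappa> > 0" "lam \<noteq> 0"
  shows "kerH 7 \<kappa> lam = cspan (psi lam ` roots 7 \<union> {ket exceptional})"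
proof
  let ?S = "psi lam ` roots 7 \<union> {ket exceptional}"
  show "kerH 7 \<kappa> lam \<subseteq> cspan ?S"
  proof
    fix \<psi> assume "\<psi> \<in> kerH 7 \<kappa> lam"
    then have "ground_conds 7 lam \<psi>"
      using kerH_eq_ground_conds[OF assms(1)] by blast
    then have "\<psi> = (\<lambda>\<sigma>. (\<Sum>R\<in>roots 7. \<psi> (content R) / lam ^ ndimers R * psi lam R \<sigma>)
        + \<psi> exceptional * ket exceptional \<sigma>)"
      using ground_conds_expansion[OF _ assms(2)] by (intro ext) simp
    also have "\<dots> \<in> cspan ?S"
      by (intro cspan_add cspan_smult cspan_sum[OF finite_roots] cspan_superset) auto
    finally show "\<psi> \<in> cspan ?S" .
  qed
  show "cspan ?S \<subseteq> kerH 7 \<kappa> lam"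
  proof
    fix v assume "v \<in> cspan ?S"
    then have "ground_conds 7 lam v"
      by (rule ground_conds_cspan[rotated]) (auto intro: psi_ground_conds ket_exceptional_ground_conds)
    then show "v \<in> kerH 7 \<kappa> lam"
      by (rule ground_conds_imp_kerH)
  qed
qed

lemma Gspace_7_inter_ket:
  "Gspace 7 lam \<inter> cspan {ket exceptional} = {\<lambda>_. 0}"
proof
  show "Gspace 7 lam \<inter> cspan {ket exceptional} \<subseteq> {\<lambda>_. 0}"
  proof
    fix v assume v: "v \<in> Gspace 7 lam \<inter> cspan {ket exceptional}"
    then obtain c where c: "v = (\<lambda>\<sigma>. c * ket exceptional \<sigma>)"
      using cspan_singleton by blast
    obtain F d where F: "finite F" "F \<subseteq> psi lam ` roots 7" "v = (\<lambda>\<sigma>. \<Sum>u\<in>F. d u * u \<sigma>)"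
      using v unfolding Gspace_def cspan_def by blast
    have "psi lam R exceptional = 0" if "R \<in> roots 7" for R
      using that exceptional_not_tileable by (simp add: roots_def psi_eq)
    then have "v exceptional = 0"
      using F by (auto intro!: sum.neutral)
    then show "v \<in> {\<lambda>_. 0}"
      using c by (simp add: ket_def)
  qed
  show "{\<lambda>_. 0} \<subseteq> Gspace 7 lam \<inter> cspan {ket exceptional}"
    unfolding Gspace_def using cspan_zero by blast
qed

theorem theorem2p15:
  fixes \<kappa> :: real and lam :: complex
  assumes "\<kappa> > 0" and "lam \<noteq> 0"
  shows "(\<forall>n. (n \<ge> 8 \<or> n = 5 \<or> n = 6) \<longrightarrow> kerH n \<kappa> lam = Gspace n lam)
       \<and> (kerH 7 \<kappa> lam = cspan (psi lam ` roots 7 \<union> {ket [True, True, False, False, False, True, True]})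
          \<and> Gspace 7 lam \<inter> cspan {ket [True, True, False, False, False, True, True]} = {\<lambda>_. 0})"
proof (intro conjI allI impI)
  fix n :: nat
  assume "n \<ge> 8 \<or> n = 5 \<or> n = 6"
  then show "kerH n \<kappa> lam = Gspace n lam"
    by (intro kerH_eq_Gspace[OF assms]) auto
qed (use kerH_7_eq[OF assms] Gspace_7_inter_ket in simp_all)

end
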